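(* Let $A = \mathrm{diag}(a_1,\dots,a_n)$ with $a_i > 0$, $\Sigma$ a diagonal positive semidefinite matrix, and $0 < \gamma < 1/\max_i a_i$. Consider the noisy quadratic model with stochastic loss $\hat L(x) = \frac{1}{2}(x - c)^T A (x - c)$, $c \sim \mathcal{N}(0,\Sigma)$ sampled independently at each step. SGD with learning rate $\gamma$ is $x_{t+1} = x_t - \gamma A(x_t - c_t)$. Lookahead with inner optimizer SGD (learning rate $\gamma$), $k \ge 1$ inner steps and step size $\alpha \in (0,1]$ is: $\theta_{t,0} = \phi_t$, $\theta_{t,i} = \theta_{t,i-1} - \gamma A(\theta_{t,i-1} - c_{t,i})$ for $i=1,\dots,k$, $\phi_{t+1} = (1-\alpha)\phi_t + \alpha\theta_{t,k}$. Then the expectations of both the SGD iterates $x_t$ and the Lookahead slow weights $\phi_t$ converge to $0$, and their coordinatewise variances (as diagonal matrices) converge to unique fixed points $V^*_{SGD}$ and $V^*_{LA}$ respectively, where $$V^*_{SGD} = \frac{\gamma^2 A^2 \Sigma}{I - (I - \gamma A)^2},$$ $$V^*_{LA} = \frac{\alpha^2\big(I - (I-\gamma A)^{2k}\big)}{\alpha^2\big(I - (I-\gamma A)^{2k}\big) + 2\alpha(1-\alpha)\big(I - (I-\gamma A)^k\big)}\, V^*_{SGD},$$ all operations being coordinatewise on diagonal matrices.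
   Context: All matrices are diagonal and fractions of diagonal matrices denote coordinatewise division. *)

theory Defs
  imports "HOL-Probability.Probability"
begin

text \<open>Diagonal matrices are represented by their diagonal vectors in real^'n;
  all operations are coordinatewise.\<close>

definition gauss_measure :: "real \<Rightarrow> real measure" where
  "gauss_measure s = (if s = 0 then return borel 0
                      else density lborel (normal_density 0 (sqrt s)))"

primrec sgd_iter :: "real \<Rightarrow> real^'n \<Rightarrow> real^'n \<Rightarrow> (nat \<Rightarrow> real^'n) \<Rightarrow> nat \<Rightarrow> real^'n" where
  "sgd_iter \<gamma> a x0 c 0 = x0"
| "sgd_iter \<gamma> a x0 c (Suc t) =
     (\<chi> j. sgd_iter \<gamma> a x0 c t $ j - \<gamma> * a $ j * (sgd_iter \<gamma> a x0 c t $ j - c t $ j))"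

primrec la_inner :: "real \<Rightarrow> real^'n \<Rightarrow> real^'n \<Rightarrow> (nat \<Rightarrow> real^'n) \<Rightarrow> nat \<Rightarrow> real^'n" where
  "la_inner \<gamma> a \<theta>0 c 0 = \<theta>0"
| "la_inner \<gamma> a \<theta>0 c (Suc i) =
     (\<chi> j. la_inner \<gamma> a \<theta>0 c i $ j - \<gamma> * a $ j * (la_inner \<gamma> a \<theta>0 c i $ j - c (Suc i) $ j))"

primrec la_slow :: "real \<Rightarrow> real \<Rightarrow> nat \<Rightarrow> real^'n \<Rightarrow> real^'n \<Rightarrow> (nat \<Rightarrow> nat \<Rightarrow> real^'n) \<Rightarrow> nat \<Rightarrow> real^'n" where
  "la_slow \<gamma> \<alpha> k a \<phi>0 c 0 = \<phi>0"
| "la_slow \<gamma> \<alpha> k a \<phi>0 c (Suc t) =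
     (1 - \<alpha>) *\<^sub>R la_slow \<gamma> \<alpha> k a \<phi>0 c t + \<alpha> *\<^sub>R la_inner \<gamma> a (la_slow \<gamma> \<alpha> k a \<phi>0 c t) (c t) k"

definition V_SGD :: "real \<Rightarrow> real^'n \<Rightarrow> real^'n \<Rightarrow> real^'n" where
  "V_SGD \<gamma> a s = (\<chi> j. \<gamma>\<^sup>2 * (a $ j)\<^sup>2 * s $ j / (1 - (1 - \<gamma> * a $ j)\<^sup>2))"

definition V_LA :: "real \<Rightarrow> real \<Rightarrow> nat \<Rightarrow> real^'n \<Rightarrow> real^'n \<Rightarrow> real^'n" where
  "V_LA \<gamma> \<alpha> k a s = (\<chi> j.
     \<alpha>\<^sup>2 * (1 - (1 - \<gamma> * a $ j) ^ (2 * k)) /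
     (\<alpha>\<^sup>2 * (1 - (1 - \<gamma> * a $ j) ^ (2 * k)) + 2 * \<alpha> * (1 - \<alpha>) * (1 - (1 - \<gamma> * a $ j) ^ k))
     * V_SGD \<gamma> a s $ j)"

end

theory Submission
  imports Defs
begin

(*
  Coordinates do not interact, so coordinate j of either algorithm is a scalar affine
  recursion x_(t+1) = b x_t + (noise), b = 1 - gamma a_j, and unrolling it writes every iterate
  as a deterministic term plus a fixed linear combination of independent centred Gaussians of
  variance s_j.  The mean is the deterministic term, which decays like b^t (resp. r^t), and
  the variance is s_j times the sum of the squared weights, a geometric series.

  For Lookahead one outer step contracts by r = 1 - alpha + alpha y, y = b^k, and injects alpha
  times the noise of k inner SGD steps, whose variance is s_j gamma^2 a_j^2 (1 - y^2) / (1 - b^2).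
  The limit variance alpha^2 (1 - y^2) / (1 - r^2) * V_SGD is the stated V_LA because
  1 - r^2 = alpha^2 (1 - y^2) + 2 alpha (1 - alpha) (1 - y).
*)

lemma gauss_measure_moments:
  assumes "\<sigma> \<ge> 0"
  shows "integrable (gauss_measure \<sigma>) (\<lambda>x. x)"
    and "integrable (gauss_measure \<sigma>) (\<lambda>x. x\<^sup>2)"
    and "(\<integral>x. x \<partial>gauss_measure \<sigma>) = 0"
    and "(\<integral>x. x\<^sup>2 \<partial>gauss_measure \<sigma>) = \<sigma>"
proof -
  have "integrable (gauss_measure \<sigma>) (\<lambda>x. x) \<and> integrable (gauss_measure \<sigma>) (\<lambda>x. x\<^sup>2)
    \<and> (\<integral>x. x \<partial>gauss_measure \<sigma>) = 0 \<and> (\<integral>x. x\<^sup>2 \<partial>gauss_measure \<sigma>) = \<sigma>"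
  proof (cases "\<sigma> = 0")
    case True
    have dirac_integrable: "integrable (return borel (0::real)) f"
      if "f \<in> borel_measurable borel" for f :: "real \<Rightarrow> real"
      using that by (simp add: integrable_iff_bounded nn_integral_return)
    show ?thesis
      using True by (simp add: gauss_measure_def dirac_integrable integral_return)
  next
    case False
    then have sd: "sqrt \<sigma> > 0"
      using assms by simp
    have density: "gauss_measure \<sigma> = density lborel (\<lambda>x. ennreal (normal_density 0 (sqrt \<sigma>) x))"
      using False by (simp add: gauss_measure_def)
    have second_moment: "integral\<^sup>L lborel (\<lambda>x. normal_density 0 (sqrt \<sigma>) x * x\<^sup>2) = \<sigma>"
      using integral_normal_moment_even[OF sd, of 0 1] assms by (simp add: power2_eq_square)
    show ?thesis
      unfolding density
      using integrable_normal_moment[OF sd, of 0 2]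
      by (simp add: integrable_real_density integral_real_density second_moment
          integrable_normal_moment_nz_1[OF sd] integral_normal_moment_nz_1[OF sd])
  qed
  then show "integrable (gauss_measure \<sigma>) (\<lambda>x. x)" "integrable (gauss_measure \<sigma>) (\<lambda>x. x\<^sup>2)"
    "(\<integral>x. x \<partial>gauss_measure \<sigma>) = 0" "(\<integral>x. x\<^sup>2 \<partial>gauss_measure \<sigma>) = \<sigma>"
    by auto
qed

lemma (in prob_space) indep_vars_imp_indep_var:
  assumes "indep_vars (\<lambda>_. N) X I" "p \<in> I" "q \<in> I" "p \<noteq> q"
  shows "indep_var N (X p) N (X q)"
proof -
  have "indep_var N ((\<lambda>f. f p) \<circ> (\<lambda>\<omega>. restrict (\<lambda>i. X i \<omega>) {p}))
      N ((\<lambda>f. f q) \<circ> (\<lambda>\<omega>. restrict (\<lambda>i. X i \<omega>) {q}))"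
    using assms by (intro indep_var_compose[OF indep_var_restrict[OF assms(1)]]) auto
  then show ?thesis
    by (simp add: comp_def)
qed

lemma (in prob_space) gaussian_variable_moments:
  assumes X: "X \<in> borel_measurable M" and law: "distr M borel X = gauss_measure \<sigma>"
    and "\<sigma> \<ge> 0"
  shows "integrable M X" "integrable M (\<lambda>\<omega>. (X \<omega>)\<^sup>2)"
    and "expectation X = 0" "expectation (\<lambda>\<omega>. (X \<omega>)\<^sup>2) = \<sigma>"
proof -
  note moments = gauss_measure_moments[OF \<open>\<sigma> \<ge> 0\<close>, folded law]
  show "integrable M X" "integrable M (\<lambda>\<omega>. (X \<omega>)\<^sup>2)"
    using moments(1,2) by (simp_all add: integrable_distr_eq[OF X])
  show "expectation X = 0" "expectation (\<lambda>\<omega>. (X \<omega>)\<^sup>2) = \<sigma>"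
    using moments(3,4) by (simp_all add: integral_distr[OF X])
qed

lemma (in prob_space) gaussian_noise_moments:
  fixes Z :: "'i \<Rightarrow> 'a \<Rightarrow> real"
  assumes indep: "indep_vars (\<lambda>_. borel) Z UNIV"
    and law: "\<And>p. distr M borel (Z p) = gauss_measure \<sigma>"
    and "\<sigma> \<ge> 0"
  shows "integrable M (Z p)"
    and "integrable M (\<lambda>\<omega>. Z p \<omega> * Z q \<omega>)"
    and "expectation (Z p) = 0"
    and "expectation (\<lambda>\<omega>. Z p \<omega> * Z q \<omega>) = (if p = q then \<sigma> else 0)"
proof -
  have "Z p \<in> borel_measurable M" for p
    using indep unfolding indep_vars_def by auto
  note single = gaussian_variable_moments[OF this law \<open>\<sigma> \<ge> 0\<close>]
  show "integrable M (Z p)" "expectation (Z p) = 0"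
    using single by auto
  have "integrable M (\<lambda>\<omega>. Z p \<omega> * Z q \<omega>)
    \<and> expectation (\<lambda>\<omega>. Z p \<omega> * Z q \<omega>) = (if p = q then \<sigma> else 0)"
  proof (cases "p = q")
    case True
    then show ?thesis
      using single by (simp add: power2_eq_square)
  next
    case False
    note pair = indep_vars_imp_indep_var[OF indep _ _ False]
    show ?thesis
      using False single indep_var_integrable[OF pair] indep_var_lebesgue_integral[OF pair] by simp
  qed
  then show "integrable M (\<lambda>\<omega>. Z p \<omega> * Z q \<omega>)"
    "expectation (\<lambda>\<omega>. Z p \<omega> * Z q \<omega>) = (if p = q then \<sigma> else 0)"
    by auto
qed

lemma (in prob_space) uncorrelated_combination_moments:
  fixes Z :: "'i \<Rightarrow> 'a \<Rightarrow> real"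
  assumes "finite I"
    and integrable: "\<And>p. integrable M (Z p)"
    and integrable_prod: "\<And>p q. integrable M (\<lambda>\<omega>. Z p \<omega> * Z q \<omega>)"
    and centred: "\<And>p. expectation (Z p) = 0"
    and covariance: "\<And>p q. expectation (\<lambda>\<omega>. Z p \<omega> * Z q \<omega>) = (if p = q then \<sigma> else 0)"
    and X: "\<And>\<omega>. X \<omega> = m + (\<Sum>p\<in>I. w p * Z p \<omega>)"
  shows "expectation X = m"
    and "variance X = \<sigma> * (\<Sum>p\<in>I. (w p)\<^sup>2)"
proof -
  have X_eq: "X = (\<lambda>\<omega>. m + (\<Sum>p\<in>I. w p * Z p \<omega>))"
    using X by auto
  have "expectation (\<lambda>\<omega>. \<Sum>p\<in>I. w p * Z p \<omega>) = (\<Sum>p\<in>I. w p * expectation (Z p))"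
    using integrable by (simp add: Bochner_Integration.integral_sum)
  then show mean: "expectation X = m"
    unfolding X_eq using integrable centred prob_space
    by (simp add: Bochner_Integration.integral_add Bochner_Integration.integrable_sum)
  have "(X \<omega> - m)\<^sup>2 = (\<Sum>p\<in>I. \<Sum>q\<in>I. (w p * w q) * (Z p \<omega> * Z q \<omega>))" for \<omega>
    unfolding X power2_eq_square by (simp add: sum_product algebra_simps)
  then have "variance X = (\<Sum>p\<in>I. \<Sum>q\<in>I. (w p * w q) * expectation (\<lambda>\<omega>. Z p \<omega> * Z q \<omega>))"
    unfolding mean using integrable_prod
    by (simp add: Bochner_Integration.integral_sum Bochner_Integration.integrable_sum)
  also have "\<dots> = (\<Sum>p\<in>I. \<Sum>q\<in>I. (w p * w q) * (if p = q then \<sigma> else 0))"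
    by (simp add: covariance)
  also have "\<dots> = \<sigma> * (\<Sum>p\<in>I. (w p)\<^sup>2)"
    using \<open>finite I\<close>
    by (simp add: if_distrib sum.delta sum_distrib_left power2_eq_square mult_ac cong: if_cong)
  finally show "variance X = \<sigma> * (\<Sum>p\<in>I. (w p)\<^sup>2)" .
qed

lemma affine_recurrence_closed_form:
  fixes x u :: "nat \<Rightarrow> 'a::comm_ring_1"
  assumes step: "\<And>t. x (Suc t) = b * x t + u t"
  shows "x t = b ^ t * x 0 + (\<Sum>i<t. b ^ (t - Suc i) * u i)"
proof (induction t)
  case (Suc t)
  have "(\<Sum>i<t. b ^ (Suc t - Suc i) * u i) = b * (\<Sum>i<t. b ^ (t - Suc i) * u i)"
    unfolding sum_distrib_left by (intro sum.cong refl) (simp add: Suc_diff_Suc[symmetric])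
  then show ?case
    using step Suc.IH by (simp add: algebra_simps)
qed simp

lemma sgd_iter_closed_form:
  "sgd_iter \<gamma> a x0 c t $ j = (1 - \<gamma> * a $ j) ^ t * x0 $ j
     + (\<Sum>i<t. (1 - \<gamma> * a $ j) ^ (t - Suc i) * (\<gamma> * a $ j * c i $ j))"
proof -
  have "sgd_iter \<gamma> a x0 c (Suc i) $ j
      = (1 - \<gamma> * a $ j) * sgd_iter \<gamma> a x0 c i $ j + \<gamma> * a $ j * c i $ j" for i
    by (simp add: algebra_simps)
  from affine_recurrence_closed_form[of "\<lambda>t. sgd_iter \<gamma> a x0 c t $ j", OF this]
  show ?thesis
    by simp
qed

lemma la_inner_closed_form:
  "la_inner \<gamma> a \<theta> c k $ j = (1 - \<gamma> * a $ j) ^ k * \<theta> $ j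
     + (\<Sum>i\<in>{1..k}. (1 - \<gamma> * a $ j) ^ (k - i) * (\<gamma> * a $ j * c i $ j))"
proof -
  have "la_inner \<gamma> a \<theta> c (Suc i) $ j
      = (1 - \<gamma> * a $ j) * la_inner \<gamma> a \<theta> c i $ j + \<gamma> * a $ j * c (Suc i) $ j" for i
    by (simp add: algebra_simps)
  from affine_recurrence_closed_form[of "\<lambda>k. la_inner \<gamma> a \<theta> c k $ j", OF this]
  show ?thesis
    by (simp add: sum.atLeast1_atMost_eq)
qed

lemma la_slow_closed_form:
  "la_slow \<gamma> \<alpha> k a \<phi>0 c t $ j = (1 - \<alpha> + \<alpha> * (1 - \<gamma> * a $ j) ^ k) ^ t * \<phi>0 $ j
     + (\<Sum>t'<t. (1 - \<alpha> + \<alpha> * (1 - \<gamma> * a $ j) ^ k) ^ (t - Suc t') *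
          (\<alpha> * (\<Sum>i\<in>{1..k}. (1 - \<gamma> * a $ j) ^ (k - i) * (\<gamma> * a $ j * c t' i $ j))))"
proof -
  have "la_slow \<gamma> \<alpha> k a \<phi>0 c (Suc t) $ j
      = (1 - \<alpha> + \<alpha> * (1 - \<gamma> * a $ j) ^ k) * la_slow \<gamma> \<alpha> k a \<phi>0 c t $ j
        + \<alpha> * (\<Sum>i\<in>{1..k}. (1 - \<gamma> * a $ j) ^ (k - i) * (\<gamma> * a $ j * c t i $ j))" for t
    by (simp add: la_inner_closed_form distrib_left distrib_right)
  from affine_recurrence_closed_form[of "\<lambda>t. la_slow \<gamma> \<alpha> k a \<phi>0 c t $ j", OF this]
  show ?thesis
    by simp
qed

lemma sum_power_reversed_atLeast1:
  "(\<Sum>i\<in>{1..k}. x ^ (k - i)) = (\<Sum>i<k. x ^ i)"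
  using sum.nat_diff_reindex[where g = "\<lambda>i. x ^ i" and n = k]
  by (simp add: sum.atLeast1_atMost_eq)

lemma (in prob_space) sgd_coordinate_moments:
  fixes c :: "nat \<Rightarrow> 'a \<Rightarrow> real^'n"
  assumes indep: "indep_vars (\<lambda>_. borel) c UNIV"
    and law: "\<And>t. distr M borel (\<lambda>\<omega>. c t \<omega> $ j) = gauss_measure \<sigma>" and "\<sigma> \<ge> 0"
  shows "expectation (\<lambda>\<omega>. sgd_iter \<gamma> a x0 (\<lambda>t. c t \<omega>) t $ j) = (1 - \<gamma> * a $ j) ^ t * x0 $ j"
    and "variance (\<lambda>\<omega>. sgd_iter \<gamma> a x0 (\<lambda>t. c t \<omega>) t $ j)
      = \<sigma> * (\<gamma> * a $ j)\<^sup>2 * (\<Sum>i<t. ((1 - \<gamma> * a $ j)\<^sup>2) ^ i)"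
proof -
  have "indep_vars (\<lambda>_. borel) (\<lambda>i \<omega>. c i \<omega> $ j) UNIV"
    by (rule indep_vars_compose2[OF indep]) simp
  note noise = gaussian_noise_moments[OF this law \<open>\<sigma> \<ge> 0\<close>]
  have closed_form: "sgd_iter \<gamma> a x0 (\<lambda>t. c t \<omega>) t $ j = (1 - \<gamma> * a $ j) ^ t * x0 $ j
      + (\<Sum>i<t. ((1 - \<gamma> * a $ j) ^ (t - Suc i) * (\<gamma> * a $ j)) * c i \<omega> $ j)" for \<omega>
    by (simp add: sgd_iter_closed_form mult.assoc)
  note moments = uncorrelated_combination_moments[OF finite_lessThan noise closed_form]
  have weights: "(\<Sum>i<t. ((1 - \<gamma> * a $ j) ^ (t - Suc i) * (\<gamma> * a $ j))\<^sup>2)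
      = (\<gamma> * a $ j)\<^sup>2 * (\<Sum>i<t. ((1 - \<gamma> * a $ j)\<^sup>2) ^ (t - Suc i))"
    by (simp add: sum_distrib_left power_mult_distrib power_mult[symmetric] mult.commute)
  show "expectation (\<lambda>\<omega>. sgd_iter \<gamma> a x0 (\<lambda>t. c t \<omega>) t $ j) = (1 - \<gamma> * a $ j) ^ t * x0 $ j"
    "variance (\<lambda>\<omega>. sgd_iter \<gamma> a x0 (\<lambda>t. c t \<omega>) t $ j)
      = \<sigma> * (\<gamma> * a $ j)\<^sup>2 * (\<Sum>i<t. ((1 - \<gamma> * a $ j)\<^sup>2) ^ i)"
    using moments weights by (simp_all add: sum.nat_diff_reindex mult_ac)
qed

lemma (in prob_space) lookahead_coordinate_moments:
  fixes c :: "nat \<Rightarrow> nat \<Rightarrow> 'a \<Rightarrow> real^'n" and a :: "real^'n" and \<gamma> \<alpha> :: real and k :: nat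
  assumes indep: "indep_vars (\<lambda>_. borel) (\<lambda>(t, i). c t i) UNIV"
    and law: "\<And>t i. distr M borel (\<lambda>\<omega>. c t i \<omega> $ j) = gauss_measure \<sigma>" and "\<sigma> \<ge> 0"
  defines "b \<equiv> 1 - \<gamma> * a $ j"
  defines "r \<equiv> 1 - \<alpha> + \<alpha> * b ^ k"
  shows "expectation (\<lambda>\<omega>. la_slow \<gamma> \<alpha> k a \<phi>0 (\<lambda>t i. c t i \<omega>) t $ j) = r ^ t * \<phi>0 $ j"
    and "variance (\<lambda>\<omega>. la_slow \<gamma> \<alpha> k a \<phi>0 (\<lambda>t i. c t i \<omega>) t $ j)
      = \<sigma> * (\<alpha> * \<gamma> * a $ j)\<^sup>2 * (\<Sum>i<t. (r\<^sup>2) ^ i) * (\<Sum>i<k. (b\<^sup>2) ^ i)"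
proof -
  define w where "w = (\<lambda>(t', i). r ^ (t - Suc t') * (\<alpha> * \<gamma> * a $ j * b ^ (k - i)))"
  have indep_coord: "indep_vars (\<lambda>_. borel) (\<lambda>p \<omega>. (case p of (t, i) \<Rightarrow> c t i) \<omega> $ j) UNIV"
    by (rule indep_vars_compose2[OF indep]) simp
  have law_coord: "distr M borel (\<lambda>\<omega>. (case p of (t, i) \<Rightarrow> c t i) \<omega> $ j) = gauss_measure \<sigma>" for p
    using law by (cases p) simp
  note noise = gaussian_noise_moments[OF indep_coord law_coord \<open>\<sigma> \<ge> 0\<close>]
  have closed_form: "la_slow \<gamma> \<alpha> k a \<phi>0 (\<lambda>t i. c t i \<omega>) t $ j = r ^ t * \<phi>0 $ j
      + (\<Sum>p\<in>{..<t} \<times> {1..k}. w p * (case p of (t, i) \<Rightarrow> c t i) \<omega> $ j)" for \<omega>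
    by (simp add: la_slow_closed_form sum.cartesian_product' sum_distrib_left
        w_def r_def b_def mult_ac)
  note moments = uncorrelated_combination_moments[OF
      finite_cartesian_product[OF finite_lessThan finite_atLeastAtMost] noise closed_form]
  have "(\<Sum>p\<in>{..<t} \<times> {1..k}. (w p)\<^sup>2)
      = (\<alpha> * \<gamma> * a $ j)\<^sup>2 * (\<Sum>t'<t. (r\<^sup>2) ^ (t - Suc t')) * (\<Sum>i\<in>{1..k}. (b\<^sup>2) ^ (k - i))"
    by (simp add: w_def sum.cartesian_product' sum_distrib_left sum_distrib_right
        power_mult_distrib power_mult[symmetric] mult_ac)
  also have "\<dots> = (\<alpha> * \<gamma> * a $ j)\<^sup>2 * (\<Sum>i<t. (r\<^sup>2) ^ i) * (\<Sum>i<k. (b\<^sup>2) ^ i)"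
    by (simp only: sum.nat_diff_reindex sum_power_reversed_atLeast1)
  finally have weights: "(\<Sum>p\<in>{..<t} \<times> {1..k}. (w p)\<^sup>2)
      = (\<alpha> * \<gamma> * a $ j)\<^sup>2 * (\<Sum>i<t. (r\<^sup>2) ^ i) * (\<Sum>i<k. (b\<^sup>2) ^ i)" .
  show "expectation (\<lambda>\<omega>. la_slow \<gamma> \<alpha> k a \<phi>0 (\<lambda>t i. c t i \<omega>) t $ j) = r ^ t * \<phi>0 $ j"
    "variance (\<lambda>\<omega>. la_slow \<gamma> \<alpha> k a \<phi>0 (\<lambda>t i. c t i \<omega>) t $ j)
      = \<sigma> * (\<alpha> * \<gamma> * a $ j)\<^sup>2 * (\<Sum>i<t. (r\<^sup>2) ^ i) * (\<Sum>i<k. (b\<^sup>2) ^ i)"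
    using moments weights by (simp_all add: mult_ac)
qed

lemma V_LA_denominator_eq:
  fixes \<alpha> y :: real
  shows "\<alpha>\<^sup>2 * (1 - y\<^sup>2) + 2 * \<alpha> * (1 - \<alpha>) * (1 - y) = 1 - (1 - \<alpha> + \<alpha> * y)\<^sup>2"
  by (simp add: power2_eq_square algebra_simps)

lemma V_LA_eq:
  assumes "(1 - \<gamma> * a $ j)\<^sup>2 \<noteq> 1"
  defines "b \<equiv> 1 - \<gamma> * a $ j"
  shows "V_LA \<gamma> \<alpha> k a s $ j
    = s $ j * (\<alpha> * \<gamma> * a $ j)\<^sup>2 / (1 - (1 - \<alpha> + \<alpha> * b ^ k)\<^sup>2) * (\<Sum>i<k. (b\<^sup>2) ^ i)"
proof -
  have geom: "(\<Sum>i<k. (b\<^sup>2) ^ i) = (1 - (b\<^sup>2) ^ k) / (1 - b\<^sup>2)"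
    using assms by (simp only: sum_gp_strict if_False)
  have "(b ^ k)\<^sup>2 = (b\<^sup>2) ^ k"
    by (metis power_mult mult.commute)
  note denominator = V_LA_denominator_eq[of \<alpha> "b ^ k", unfolded this]
  show ?thesis
    unfolding geom V_LA_def V_SGD_def vec_lambda_beta power_mult b_def[symmetric] denominator
    by (simp add: power_mult_distrib mult_ac)
qed

lemma step_size_lt_one:
  fixes a :: "real^'n"
  assumes "\<forall>j. a $ j > 0" and "\<gamma> < 1 / (MAX j\<in>UNIV. a $ j)"
  shows "\<gamma> * a $ j < 1"
proof -
  have max: "a $ j \<le> (MAX j\<in>UNIV. a $ j)"
    by (rule Max_ge) auto
  then have "0 < (MAX j\<in>UNIV. a $ j)"
    using assms(1) by (meson less_le_trans)
  then have "\<gamma> * (MAX j\<in>UNIV. a $ j) < 1"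
    using assms(2) by (simp add: less_divide_eq)
  then show ?thesis
    using assms(1) mult_left_mono[OF max] mult_neg_pos[of \<gamma> "a $ j"]
    by (cases "\<gamma> \<ge> 0") force+
qed

lemma (in prob_space) sgd_coordinate_limits:
  fixes c :: "nat \<Rightarrow> 'a \<Rightarrow> real^'n"
  assumes indep: "indep_vars (\<lambda>_. borel) c UNIV"
    and law: "\<And>t. distr M borel (\<lambda>\<omega>. c t \<omega> $ j) = gauss_measure (s $ j)" and "s $ j \<ge> 0"
    and stable: "\<bar>1 - \<gamma> * a $ j\<bar> < 1"
  shows "(\<lambda>t. expectation (\<lambda>\<omega>. sgd_iter \<gamma> a x0 (\<lambda>t. c t \<omega>) t $ j)) \<longlonglongrightarrow> 0"
    and "(\<lambda>t. variance (\<lambda>\<omega>. sgd_iter \<gamma> a x0 (\<lambda>t. c t \<omega>) t $ j)) \<longlonglongrightarrow> V_SGD \<gamma> a s $ j"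
proof -
  note moments = sgd_coordinate_moments[OF indep law \<open>s $ j \<ge> 0\<close>]
  have "norm ((1 - \<gamma> * a $ j)\<^sup>2) < 1"
    using stable by (simp add: abs_square_less_1)
  then have "(\<lambda>t. s $ j * (\<gamma> * a $ j)\<^sup>2 * (\<Sum>i<t. ((1 - \<gamma> * a $ j)\<^sup>2) ^ i))
      \<longlonglongrightarrow> s $ j * (\<gamma> * a $ j)\<^sup>2 * (1 / (1 - (1 - \<gamma> * a $ j)\<^sup>2))"
    by (intro tendsto_mult_left geometric_sums[unfolded sums_def])
  then show "(\<lambda>t. variance (\<lambda>\<omega>. sgd_iter \<gamma> a x0 (\<lambda>t. c t \<omega>) t $ j)) \<longlonglongrightarrow> V_SGD \<gamma> a s $ j"
    unfolding moments(2) by (simp add: V_SGD_def power_mult_distrib mult_ac)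
  show "(\<lambda>t. expectation (\<lambda>\<omega>. sgd_iter \<gamma> a x0 (\<lambda>t. c t \<omega>) t $ j)) \<longlonglongrightarrow> 0"
    unfolding moments using stable by (intro tendsto_mult_left_zero LIMSEQ_abs_realpow_zero2)
qed

lemma (in prob_space) lookahead_coordinate_limits:
  fixes c :: "nat \<Rightarrow> nat \<Rightarrow> 'a \<Rightarrow> real^'n"
  assumes indep: "indep_vars (\<lambda>_. borel) (\<lambda>(t, i). c t i) UNIV"
    and law: "\<And>t i. distr M borel (\<lambda>\<omega>. c t i \<omega> $ j) = gauss_measure (s $ j)" and "s $ j \<ge> 0"
    and stable: "\<bar>1 - \<gamma> * a $ j\<bar> < 1" and "k \<ge> 1" and "0 < \<alpha>" "\<alpha> \<le> 1"
  shows "(\<lambda>t. expectation (\<lambda>\<omega>. la_slow \<gamma> \<alpha> k a \<phi>0 (\<lambda>t i. c t i \<omega>) t $ j)) \<longlonglongrightarrow> 0"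
    and "(\<lambda>t. variance (\<lambda>\<omega>. la_slow \<gamma> \<alpha> k a \<phi>0 (\<lambda>t i. c t i \<omega>) t $ j))
      \<longlonglongrightarrow> V_LA \<gamma> \<alpha> k a s $ j"
proof -
  define b where "b = 1 - \<gamma> * a $ j"
  define r where "r = 1 - \<alpha> + \<alpha> * b ^ k"
  note moments = lookahead_coordinate_moments[OF indep law \<open>s $ j \<ge> 0\<close>,
      where \<gamma> = \<gamma> and a = a and \<alpha> = \<alpha> and k = k, folded b_def r_def]
  have "\<bar>b ^ k\<bar> < 1"
    unfolding power_abs using stable \<open>k \<ge> 1\<close> by (simp add: b_def power_less_one_iff)
  then have "0 < 1 - b ^ k" "1 - b ^ k < 2"
    by (simp_all add: abs_less_iff)
  moreover have "\<alpha> * (1 - b ^ k) \<le> 1 - b ^ k"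
    using calculation \<open>\<alpha> \<le> 1\<close> by (simp add: mult_left_le_one_le)
  ultimately have "\<bar>r\<bar> < 1"
    using \<open>0 < \<alpha>\<close> by (simp add: r_def abs_less_iff algebra_simps)
  have "(1 - \<gamma> * a $ j)\<^sup>2 < 1"
    using stable by (simp add: abs_square_less_1)
  then have limit_eq: "s $ j * (\<alpha> * \<gamma> * a $ j)\<^sup>2 * (1 / (1 - r\<^sup>2)) * (\<Sum>i<k. (b\<^sup>2) ^ i)
      = V_LA \<gamma> \<alpha> k a s $ j"
    using V_LA_eq[of \<gamma> a j \<alpha> k s] by (simp add: r_def b_def)
  have "norm (r\<^sup>2) < 1"
    using \<open>\<bar>r\<bar> < 1\<close> by (simp add: abs_square_less_1)
  then have "(\<lambda>t. s $ j * (\<alpha> * \<gamma> * a $ j)\<^sup>2 * (\<Sum>i<t. (r\<^sup>2) ^ i) * (\<Sum>i<k. (b\<^sup>2) ^ i))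
      \<longlonglongrightarrow> s $ j * (\<alpha> * \<gamma> * a $ j)\<^sup>2 * (1 / (1 - r\<^sup>2)) * (\<Sum>i<k. (b\<^sup>2) ^ i)"
    by (intro tendsto_mult_right tendsto_mult_left geometric_sums[unfolded sums_def])
  then show "(\<lambda>t. variance (\<lambda>\<omega>. la_slow \<gamma> \<alpha> k a \<phi>0 (\<lambda>t i. c t i \<omega>) t $ j))
      \<longlonglongrightarrow> V_LA \<gamma> \<alpha> k a s $ j"
    unfolding moments(2) limit_eq .
  show "(\<lambda>t. expectation (\<lambda>\<omega>. la_slow \<gamma> \<alpha> k a \<phi>0 (\<lambda>t i. c t i \<omega>) t $ j)) \<longlonglongrightarrow> 0"
    unfolding moments(1) using \<open>\<bar>r\<bar> < 1\<close>
    by (intro tendsto_mult_left_zero LIMSEQ_abs_realpow_zero2)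
qed

theorem proposition2:
  fixes M :: "'w measure"
    and a s x0 \<phi>0 :: "real^'n"
    and \<gamma> \<alpha> :: real and k :: nat
    and cS :: "nat \<Rightarrow> 'w \<Rightarrow> real^'n"
    and cL :: "nat \<Rightarrow> nat \<Rightarrow> 'w \<Rightarrow> real^'n"
  assumes "prob_space M"
    and a_pos: "\<forall>j. a $ j > 0"
    and s_nonneg: "\<forall>j. s $ j \<ge> 0"
    and \<gamma>_pos: "0 < \<gamma>" and \<gamma>_bound: "\<gamma> < 1 / (MAX j\<in>UNIV. a $ j)"
    and k_pos: "k \<ge> 1"
    and \<alpha>_range: "0 < \<alpha>" "\<alpha> \<le> 1"
    \<comment> \<open>SGD noise: c_t i.i.d. N(0, diag s)\<close>
    and cS_indep: "prob_space.indep_vars M (\<lambda>_. borel) cS UNIV"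
    and cS_coord_indep: "\<forall>t. prob_space.indep_vars M (\<lambda>_. borel) (\<lambda>j \<omega>. cS t \<omega> $ j) UNIV"
    and cS_law: "\<forall>t j. distr M borel (\<lambda>\<omega>. cS t \<omega> $ j) = gauss_measure (s $ j)"
    \<comment> \<open>Lookahead noise: c_{t,i} i.i.d. N(0, diag s)\<close>
    and cL_indep: "prob_space.indep_vars M (\<lambda>_. borel) (\<lambda>(t, i). cL t i) UNIV"
    and cL_coord_indep: "\<forall>t i. prob_space.indep_vars M (\<lambda>_. borel) (\<lambda>j \<omega>. cL t i \<omega> $ j) UNIV"
    and cL_law: "\<forall>t i j. distr M borel (\<lambda>\<omega>. cL t i \<omega> $ j) = gauss_measure (s $ j)"
  shows
    "(\<forall>j. (\<lambda>t. integral\<^sup>L M (\<lambda>\<omega>. sgd_iter \<gamma> a x0 (\<lambda>t. cS t \<omega>) t $ j)) \<longlonglongrightarrow> 0)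
   \<and> (\<forall>j. (\<lambda>t. integral\<^sup>L M (\<lambda>\<omega>. (sgd_iter \<gamma> a x0 (\<lambda>t. cS t \<omega>) t $ j
              - integral\<^sup>L M (\<lambda>\<omega>'. sgd_iter \<gamma> a x0 (\<lambda>t. cS t \<omega>') t $ j))\<^sup>2))
          \<longlonglongrightarrow> V_SGD \<gamma> a s $ j)
   \<and> (\<forall>j. (\<lambda>t. integral\<^sup>L M (\<lambda>\<omega>. la_slow \<gamma> \<alpha> k a \<phi>0 (\<lambda>t i. cL t i \<omega>) t $ j)) \<longlonglongrightarrow> 0)
   \<and> (\<forall>j. (\<lambda>t. integral\<^sup>L M (\<lambda>\<omega>. (la_slow \<gamma> \<alpha> k a \<phi>0 (\<lambda>t i. cL t i \<omega>) t $ j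
              - integral\<^sup>L M (\<lambda>\<omega>'. la_slow \<gamma> \<alpha> k a \<phi>0 (\<lambda>t i. cL t i \<omega>') t $ j))\<^sup>2))
          \<longlonglongrightarrow> V_LA \<gamma> \<alpha> k a s $ j)"
proof -
  interpret prob_space M by fact
  have stable: "\<bar>1 - \<gamma> * a $ j\<bar> < 1" for j
    using step_size_lt_one[OF a_pos \<gamma>_bound, of j] a_pos \<gamma>_pos by (simp add: abs_less_iff)
  \<comment> \<open>Each coordinate is handled on its own, so cS_coord_indep and cL_coord_indep are not needed.\<close>
  have "(\<lambda>t. expectation (\<lambda>\<omega>. sgd_iter \<gamma> a x0 (\<lambda>t. cS t \<omega>) t $ j)) \<longlonglongrightarrow> 0"
    "(\<lambda>t. variance (\<lambda>\<omega>. sgd_iter \<gamma> a x0 (\<lambda>t. cS t \<omega>) t $ j)) \<longlonglongrightarrow> V_SGD \<gamma> a s $ j" for j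
    using sgd_coordinate_limits[OF cS_indep cS_law[rule_format] s_nonneg[rule_format] stable] .
  moreover have "(\<lambda>t. expectation (\<lambda>\<omega>. la_slow \<gamma> \<alpha> k a \<phi>0 (\<lambda>t i. cL t i \<omega>) t $ j)) \<longlonglongrightarrow> 0"
    "(\<lambda>t. variance (\<lambda>\<omega>. la_slow \<gamma> \<alpha> k a \<phi>0 (\<lambda>t i. cL t i \<omega>) t $ j))
      \<longlonglongrightarrow> V_LA \<gamma> \<alpha> k a s $ j" for j
    using lookahead_coordinate_limits[OF cL_indep cL_law[rule_format] s_nonneg[rule_format] stable
        k_pos \<alpha>_range] .
  ultimately show ?thesis
    by blast
qed

end
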